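(* Let $T$ be a positive integer, $(\Omega,\mathcal{F},P)$ a probability space, and $\mathbb{F}=(\mathcal{F}_t)_{t=0}^T$, $\mathbb{G}=(\mathcal{G}_t)_{t=0}^T$ two filtrations with $\mathcal{G}_t\subseteq\mathcal{F}_t$ for every $t$. Let $X^2,Y^2$ be real-valued processes $(X^2_t)_{t=0}^T$, $(Y^2_t)_{t=0}^T$ adapted to $\mathbb{G}$ with $E\left(\max_{0\le t\le T}|X^2_t|\right)<\infty$ and $E\left(\max_{0\le t\le T}|Y^2_t|\right)<\infty$. Let $\tau\in\mathcal{T}(\mathbb{F})$ and let $t\in\{0,1,\dots,T-1\}$. Then there exists $\hat{\nu}_t\in\mathcal{T}_t(\mathbb{G})$ such that, $P$-a.s., \begin{align*} &E\left[X^2_{\hat{\nu}_t}\mathbf{1}_{\{\hat{\nu}_t<\tau\}}+Y^2_{\tau}\mathbf{1}_{\{\tau\leq\hat{\nu}_t\}}\,\big|\,\mathcal{G}_t^\tau\right]=\operatorname{ess\,sup}_{\nu\in\mathcal{T}_t(\mathbb{G}^\tau)}E\left[X^2_\nu\mathbf{1}_{\{\nu<\tau\}}+Y^2_{\tau}\mathbf{1}_{\{\tau\leq\nu\}}\,\big|\,\mathcal{G}_t^\tau\right]\\ &=Y^2_\tau\mathbf{1}_{\{\tau\leq t\}}+\mathbf{1}_{\{\tau>t\}}\operatorname{ess\,sup}_{\nu\in\mathcal{T}_t(\mathbb{G})}E_{P|\{\tau>t\}}\left[X^2_\nu\mathbf{1}_{\{\nu<\tau\}}+Y^2_\tau\mathbf{1}_{\{\tau\leq\nu\}}\,\big|\,\mathcal{G}_t\right].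 \end{align*}
   Context: Time is discrete, taking values in $\{0,1,\dots,T\}$. For a filtration $\mathbb{H}$, $\mathcal{T}(\mathbb{H})$ denotes the set of $\mathbb{H}$-stopping times with values in $\{0,\dots,T\}$, and $\mathcal{T}_t(\mathbb{H})$ the set of $\mathbb{H}$-stopping times $\nu$ with $P(t\le\nu\le T)=1$. For $\tau\in\mathcal{T}(\mathbb{F})$, the filtration $\mathbb{G}^\tau=(\mathcal{G}^\tau_t)_{t=0}^T$ is defined by $\mathcal{G}_t^\tau=\mathcal{G}_t\vee\sigma\{\mathbf{1}_{\{\tau\le s\}};0\le s\le t\}$. $E_{P|\{\tau>t\}}[\,\cdot\,|\mathcal{G}_t]$ denotes conditional expectation given $\mathcal{G}_t$ under the conditional probability measure $P(\cdot\mid\tau>t)$; when $P(\tau>t)=0$ the term multiplied by $\mathbf{1}_{\{\tau>t\}}$ is understood to vanish. *)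

theory Defs
  imports "HOL-Probability.Probability"
begin

text \<open>Discrete time horizon {0..T}. A filtration is a function H :: nat => 'a measure,
  only its values at indices 0..T matter.\<close>

definition stopping_time_upto :: "'a measure \<Rightarrow> (nat \<Rightarrow> 'a measure) \<Rightarrow> nat \<Rightarrow> ('a \<Rightarrow> nat) \<Rightarrow> bool" where
  "stopping_time_upto M H T \<nu> \<longleftrightarrow>
     (\<forall>\<omega>\<in>space M. \<nu> \<omega> \<le> T) \<and> (\<forall>s\<le>T. {\<omega>\<in>space M. \<nu> \<omega> \<le> s} \<in> sets (H s))"

definition stopping_times_from :: "'a measure \<Rightarrow> (nat \<Rightarrow> 'a measure) \<Rightarrow> nat \<Rightarrow> nat \<Rightarrow> ('a \<Rightarrow> nat) set" where
  "stopping_times_from M H T t = {\<nu>. stopping_time_upto M H T \<nu> \<and> (AE \<omega> in M. t \<le> \<nu> \<omega>)}"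

definition prog_enlargement :: "'a measure \<Rightarrow> (nat \<Rightarrow> 'a measure) \<Rightarrow> ('a \<Rightarrow> nat) \<Rightarrow> nat \<Rightarrow> 'a measure" where
  "prog_enlargement M G \<tau> t =
     sigma (space M) (sets (G t) \<union> {{\<omega>\<in>space M. \<tau> \<omega> \<le> s} | s. s \<le> t})"

definition is_ess_sup_family :: "'a measure \<Rightarrow> ('a \<Rightarrow> ereal) set \<Rightarrow> ('a \<Rightarrow> ereal) \<Rightarrow> bool" where
  "is_ess_sup_family N \<Phi> Z \<longleftrightarrow>
     Z \<in> borel_measurable N \<and>
     (\<forall>\<phi>\<in>\<Phi>. AE \<omega> in N. \<phi> \<omega> \<le> Z \<omega>) \<and>
     (\<forall>Z'. Z' \<in> borel_measurable N \<and> (\<forall>\<phi>\<in>\<Phi>. AE \<omega> in N. \<phi> \<omega> \<le> Z' \<omega>)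
           \<longrightarrow> (AE \<omega> in N. Z \<omega> \<le> Z' \<omega>))"

definition ess_sup_family :: "'a measure \<Rightarrow> ('a \<Rightarrow> ereal) set \<Rightarrow> ('a \<Rightarrow> ereal)" where
  "ess_sup_family N \<Phi> = (SOME Z. is_ess_sup_family N \<Phi> Z)"

definition payoff :: "(nat \<Rightarrow> 'a \<Rightarrow> real) \<Rightarrow> (nat \<Rightarrow> 'a \<Rightarrow> real) \<Rightarrow> ('a \<Rightarrow> nat) \<Rightarrow> ('a \<Rightarrow> nat) \<Rightarrow> 'a \<Rightarrow> real" where
  "payoff X Y \<tau> \<nu> \<omega> =
     X (\<nu> \<omega>) \<omega> * (if \<nu> \<omega> < \<tau> \<omega> then 1 else 0) + Y (\<tau> \<omega>) \<omega> * (if \<tau> \<omega> \<le> \<nu> \<omega> then 1 else 0)"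

end

(* Write H for the progressively enlarged filtration G^tau. Every set of H_k coincides on {tau > k}
   with a set of G_k, and on {tau <= k} every payoff of a stopping time >= k equals the known value
   Y_tau. Hence the backward induction for the Snell envelope with respect to H can choose its
   stopping region {immediate payoff >= continuation value} inside G_k, which produces a G-stopping time that
   is optimal among all H-stopping times; this gives the first equality. On {tau > t}, conditioning
   on H_t under P is conditioning on G_t under P(. | tau > t), which gives the second. *)

theory Submission
  imports Defs
begin

lemma stopping_time_upto_mono:
  assumes "stopping_time_upto M F T \<nu>" and "\<And>s. s \<le> T \<Longrightarrow> sets (F s) \<subseteq> sets (F' s)"
  shows "stopping_time_upto M F' T \<nu>"
  using assms unfolding stopping_time_upto_def by blast

lemma stopping_time_upto_const:
  assumes "k \<le> T" and "\<And>s. s \<le> T \<Longrightarrow> subalgebra M (F s)"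
  shows "stopping_time_upto M F T (\<lambda>_. k)"
  unfolding stopping_time_upto_def
proof (intro conjI ballI allI impI)
  fix s assume "s \<le> T"
  then have "space M \<in> sets (F s)"
    using assms(2)[of s] sets.top[of "F s"] by (simp add: subalgebra_def)
  then show "{\<omega> \<in> space M. k \<le> s} \<in> sets (F s)"
    by (cases "k \<le> s") auto
qed (use assms(1) in simp)

lemma stopping_time_upto_max_const:
  assumes "stopping_time_upto M F T \<nu>" and "k \<le> T"
  shows "stopping_time_upto M F T (\<lambda>\<omega>. max (\<nu> \<omega>) k)"
  unfolding stopping_time_upto_def
proof (intro conjI ballI allI impI)
  fix s assume s: "s \<le> T"
  show "{\<omega> \<in> space M. max (\<nu> \<omega>) k \<le> s} \<in> sets (F s)"
  proof (cases "k \<le> s")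
    case True
    then have "{\<omega> \<in> space M. max (\<nu> \<omega>) k \<le> s} = {\<omega> \<in> space M. \<nu> \<omega> \<le> s}" by auto
    then show ?thesis using assms(1) s unfolding stopping_time_upto_def by simp
  qed simp
qed (use assms in \<open>auto simp: stopping_time_upto_def\<close>)

lemma stopping_time_upto_if:
  assumes \<sigma>: "stopping_time_upto M F T \<sigma>" and \<sigma>_ge: "\<forall>\<omega>\<in>space M. k \<le> \<sigma> \<omega>"
    and B: "B \<in> sets (F k)" and "k \<le> T"
    and F_sub: "\<And>s. s \<le> T \<Longrightarrow> subalgebra M (F s)"
    and F_mono: "\<And>r s. r \<le> s \<Longrightarrow> s \<le> T \<Longrightarrow> sets (F r) \<subseteq> sets (F s)"
  shows "stopping_time_upto M F T (\<lambda>\<omega>. if \<omega> \<in> B then k else \<sigma> \<omega>)"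
  unfolding stopping_time_upto_def
proof (intro conjI ballI allI impI)
  fix s assume s: "s \<le> T"
  show "{\<omega> \<in> space M. (if \<omega> \<in> B then k else \<sigma> \<omega>) \<le> s} \<in> sets (F s)"
  proof (cases "k \<le> s")
    case True
    have "B \<subseteq> space M"
      using sets.sets_into_space[OF B] F_sub[OF \<open>k \<le> T\<close>] by (simp add: subalgebra_def)
    then have "{\<omega> \<in> space M. (if \<omega> \<in> B then k else \<sigma> \<omega>) \<le> s} = B \<union> {\<omega> \<in> space M. \<sigma> \<omega> \<le> s}"
      using True by auto
    moreover have "B \<in> sets (F s)" using B F_mono[OF True s] by blast
    ultimately show ?thesis using \<sigma> s unfolding stopping_time_upto_def by auto
  next
    case False
    then have "{\<omega> \<in> space M. (if \<omega> \<in> B then k else \<sigma> \<omega>) \<le> s} = {}"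
      using \<sigma>_ge by (auto simp: not_le)
    then show ?thesis by (metis sets.empty_sets)
  qed
qed (use assms in \<open>auto simp: stopping_time_upto_def\<close>)

lemma stopping_time_upto_measurable:
  assumes "stopping_time_upto M (\<lambda>_. N) T \<nu>" and "space N = space M"
  shows "\<nu> \<in> measurable N (count_space {..T})"
proof (rule iffD2[OF measurable_count_space_eq2[OF finite_atMost]], intro conjI ballI)
  show "\<nu> \<in> space N \<rightarrow> {..T}" using assms unfolding stopping_time_upto_def by auto
  fix s assume "s \<in> {..T}"
  then have "{\<omega> \<in> space M. \<nu> \<omega> \<le> s} - {\<omega> \<in> space M. \<nu> \<omega> \<le> s - 1} \<in> sets N"
    using assms(1) unfolding stopping_time_upto_def by auto
  moreover have "{\<omega> \<in> space M. \<nu> \<omega> \<le> 0} \<in> sets N"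
    using assms(1) unfolding stopping_time_upto_def by auto
  moreover have "\<nu> -` {s} \<inter> space N =
      (if s = 0 then {\<omega> \<in> space M. \<nu> \<omega> \<le> 0}
       else {\<omega> \<in> space M. \<nu> \<omega> \<le> s} - {\<omega> \<in> space M. \<nu> \<omega> \<le> s - 1})"
    using assms(2) by auto
  ultimately show "\<nu> -` {s} \<inter> space N \<in> sets N" by simp
qed

lemma sigma_sets_trace_disjoint_generators:
  assumes "D \<in> sigma_sets (space N) (sets N \<union> E)" and "\<And>e. e \<in> E \<Longrightarrow> e \<inter> A = {}"
  shows "\<exists>B\<in>sets N. D \<inter> A = B \<inter> A"
  using assms(1)
proof induction
  case (Basic e)
  then show ?case
  proof
    assume "e \<in> E"
    then show ?thesis using assms(2) by (intro bexI[of _ "{}"]) auto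
  qed blast
next
  case Empty
  show ?case by blast
next
  case (Compl D)
  then obtain B where "B \<in> sets N" "D \<inter> A = B \<inter> A" by blast
  then show ?case by (intro bexI[of _ "space N - B"]) auto
next
  case (Union D)
  then obtain B where B: "\<And>i. B i \<in> sets N" "\<And>i. D i \<inter> A = B i \<inter> A" by metis
  then show ?case by (intro bexI[of _ "\<Union>i. B i"]) auto
qed

lemma ess_sup_family_eq_greatest:
  assumes "Z \<in> \<Phi>" and "Z \<in> borel_measurable N" and "\<And>\<phi>. \<phi> \<in> \<Phi> \<Longrightarrow> AE \<omega> in N. \<phi> \<omega> \<le> Z \<omega>"
  shows "AE \<omega> in N. ess_sup_family N \<Phi> \<omega> = Z \<omega>"
proof -
  have Z: "is_ess_sup_family N \<Phi> Z"
    using assms unfolding is_ess_sup_family_def by blast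
  then have S: "is_ess_sup_family N \<Phi> (ess_sup_family N \<Phi>)"
    unfolding ess_sup_family_def by (rule someI[of "is_ess_sup_family N \<Phi>"])
  have "AE \<omega> in N. ess_sup_family N \<Phi> \<omega> \<le> Z \<omega>" "AE \<omega> in N. Z \<omega> \<le> ess_sup_family N \<Phi> \<omega>"
    using S Z unfolding is_ess_sup_family_def by blast+
  then show ?thesis by eventually_elim simp
qed

lemma (in sigma_finite_subalgebra) real_cond_exp_local:
  assumes C: "C \<in> sets F" and f: "integrable M f" and g: "integrable M g"
    and eq: "AE \<omega> in M. \<omega> \<in> C \<longrightarrow> f \<omega> = g \<omega>"
  shows "AE \<omega> in M. \<omega> \<in> C \<longrightarrow> real_cond_exp M F f \<omega> = real_cond_exp M F g \<omega>"
proof -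
  have CM: "C \<in> sets M" using C subalg by (auto simp: subalgebra_def)
  have "AE \<omega> in M. real_cond_exp M F (\<lambda>\<omega>. indicator C \<omega> * f \<omega>) \<omega> = indicator C \<omega> * real_cond_exp M F f \<omega>"
    "AE \<omega> in M. real_cond_exp M F (\<lambda>\<omega>. indicator C \<omega> * g \<omega>) \<omega> = indicator C \<omega> * real_cond_exp M F g \<omega>"
    using C f g integrable_mult_indicator[OF CM f] integrable_mult_indicator[OF CM g]
    by (auto intro!: real_cond_exp_mult)
  moreover have "AE \<omega> in M. real_cond_exp M F (\<lambda>\<omega>. indicator C \<omega> * f \<omega>) \<omega> = real_cond_exp M F (\<lambda>\<omega>. indicator C \<omega> * g \<omega>) \<omega>"
    using eq CM f g by (intro real_cond_exp_cong) (auto simp: indicator_def)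
  ultimately show ?thesis by eventually_elim (simp add: indicator_def)
qed

lemma (in sigma_finite_subalgebra) real_cond_exp_mono_tower:
  assumes "subalgebra M F'" and "subalgebra F' F" and f: "integrable M f" and g: "integrable M g"
    and "AE \<omega> in M. real_cond_exp M F' f \<omega> \<le> real_cond_exp M F' g \<omega>"
  shows "AE \<omega> in M. real_cond_exp M F f \<omega> \<le> real_cond_exp M F g \<omega>"
proof -
  interpret F': sigma_finite_subalgebra M F'
    by (rule nested_subalg_is_sigma_finite[OF assms(1,2)])
  have "AE \<omega> in M. real_cond_exp M F (real_cond_exp M F' f) \<omega> \<le> real_cond_exp M F (real_cond_exp M F' g) \<omega>"
    using assms(5) f g by (intro real_cond_exp_mono) auto
  moreover have "AE \<omega> in M. real_cond_exp M F (real_cond_exp M F' f) \<omega> = real_cond_exp M F f \<omega>"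
    "AE \<omega> in M. real_cond_exp M F (real_cond_exp M F' g) \<omega> = real_cond_exp M F g \<omega>"
    using assms(1,2) f g by (auto intro: real_cond_exp_nested_subalg)
  ultimately show ?thesis by eventually_elim simp
qed

lemma uniform_measure_eq_density:
  assumes "emeasure M A \<noteq> 0" and "emeasure M A \<noteq> \<infinity>"
  shows "uniform_measure M A = density M (\<lambda>\<omega>. ennreal (indicator A \<omega> / measure M A))"
proof -
  have "0 < measure M A"
    using assms by (simp add: measure_def enn2real_positive_iff less_top[symmetric] zero_less_iff_neq_zero)
  then have "indicator A \<omega> / emeasure M A = ennreal (indicator A \<omega> / measure M A)" for \<omega>
    using assms by (simp add: emeasure_eq_ennreal_measure indicator_def divide_ennreal[symmetric])
  then show ?thesis unfolding uniform_measure_def by simp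
qed

lemma
  fixes h :: "'a \<Rightarrow> real"
  assumes A: "emeasure M A \<noteq> 0" "emeasure M A \<noteq> \<infinity>" and h: "h \<in> borel_measurable M"
  shows integrable_uniform_measure:
      "integrable (uniform_measure M A) h \<longleftrightarrow> integrable M (\<lambda>\<omega>. indicator A \<omega> * h \<omega>)"
    and integral_uniform_measure:
      "integral\<^sup>L (uniform_measure M A) h = (\<integral>\<omega>. indicator A \<omega> * h \<omega> \<partial>M) / measure M A"
proof -
  have AM: "A \<in> sets M" using A(1) by (rule emeasure_neq_0_sets)
  have q: "0 < measure M A"
    using A by (simp add: measure_def enn2real_positive_iff less_top[symmetric] zero_less_iff_neq_zero)
  have d: "(\<lambda>\<omega>. indicator A \<omega> / measure M A) \<in> borel_measurable M" using AM by measurable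
  have "integrable (uniform_measure M A) h \<longleftrightarrow> integrable M (\<lambda>\<omega>. (indicator A \<omega> * h \<omega>) / measure M A)"
    unfolding uniform_measure_eq_density[OF A] using q
    by (subst integrable_density[OF h d]) (auto simp: mult.commute)
  also have "\<dots> \<longleftrightarrow> integrable M (\<lambda>\<omega>. indicator A \<omega> * h \<omega>)"
    using q by (simp add: divide_inverse)
  finally show "integrable (uniform_measure M A) h \<longleftrightarrow> integrable M (\<lambda>\<omega>. indicator A \<omega> * h \<omega>)" .
  have "integral\<^sup>L (uniform_measure M A) h = (\<integral>\<omega>. (indicator A \<omega> * h \<omega>) / measure M A \<partial>M)"
    unfolding uniform_measure_eq_density[OF A] using q
    by (subst integral_density[OF h d]) (auto simp: mult.commute)
  then show "integral\<^sup>L (uniform_measure M A) h = (\<integral>\<omega>. indicator A \<omega> * h \<omega> \<partial>M) / measure M A"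
    by simp
qed

lemma (in finite_measure) real_cond_exp_indicator_uniform_measure:
  assumes H: "subalgebra M H" and F: "subalgebra H F"
    and A: "A \<in> sets H" and A_pos: "emeasure M A \<noteq> 0"
    and trace: "\<And>D. D \<in> sets H \<Longrightarrow> \<exists>B\<in>sets F. D \<inter> A = B \<inter> A"
    and f: "integrable M f"
  shows "AE \<omega> in M. real_cond_exp M H (\<lambda>\<omega>. indicator A \<omega> * f \<omega>) \<omega>
    = indicator A \<omega> * real_cond_exp (uniform_measure M A) F f \<omega>"
proof -
  define N where "N = uniform_measure M A"
  define W where "W = real_cond_exp N F f"
  have A_fin: "emeasure M A \<noteq> \<infinity>" by simp
  have AM: "A \<in> sets M" using A H by (auto simp: subalgebra_def)
  have sets_F: "sets F \<subseteq> sets M" "space F = space M" using H F by (auto simp: subalgebra_def)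
  interpret MH: sigma_finite_subalgebra M H
    by (rule finite_measure_subalgebra_is_sigma_finite) (unfold_locales, fact H)
  interpret N: prob_space N
    unfolding N_def using A_pos by (rule prob_space_uniform_measure) simp
  interpret NF: sigma_finite_subalgebra N F
    by (rule finite_measure_subalgebra_is_sigma_finite, unfold_locales)
       (use sets_F in \<open>auto simp: N_def subalgebra_def\<close>)
  have int_N: "integrable N h \<longleftrightarrow> integrable M (\<lambda>\<omega>. indicator A \<omega> * h \<omega>)"
    and integral_N: "(\<integral>\<omega>. indicator A \<omega> * h \<omega> \<partial>M) = measure M A * integral\<^sup>L N h"
    if "h \<in> borel_measurable M" for h :: "'a \<Rightarrow> real"
    using integrable_uniform_measure[OF A_pos A_fin that] integral_uniform_measure[OF A_pos A_fin that]
      A_pos by (auto simp: N_def measure_def enn2real_eq_0_iff)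
  have f_meas: "f \<in> borel_measurable M" using f by (rule borel_measurable_integrable)
  have f_N: "integrable N f"
    using int_N[OF f_meas] integrable_mult_indicator[OF AM f] by simp
  have W_F: "W \<in> borel_measurable F" unfolding W_def by simp
  have W_M: "W \<in> borel_measurable M" unfolding W_def N_def by simp
  have "AE \<omega> in M. real_cond_exp M H (\<lambda>\<omega>. indicator A \<omega> * f \<omega>) \<omega> = indicator A \<omega> * W \<omega>"
  proof (rule MH.real_cond_exp_charact)
    fix D assume "D \<in> sets H"
    then obtain B where B: "B \<in> sets F" and DB: "D \<inter> A = B \<inter> A" using trace by blast
    have restrict: "(\<integral>\<omega>\<in>D. indicator A \<omega> * g \<omega> \<partial>M) = (\<integral>\<omega>. indicator A \<omega> * (indicator B \<omega> * g \<omega>) \<partial>M)"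
      for g :: "'a \<Rightarrow> real"
    proof -
      have "(\<lambda>\<omega>. indicator D \<omega> *\<^sub>R (indicator A \<omega> * g \<omega>)) = (\<lambda>\<omega>. indicator A \<omega> * (indicator B \<omega> * g \<omega>))"
        using DB by (auto simp: indicator_def fun_eq_iff)
      then show ?thesis unfolding set_lebesgue_integral_def by simp
    qed
    have "(\<integral>\<omega>\<in>B. f \<omega> \<partial>N) = (\<integral>\<omega>\<in>B. W \<omega> \<partial>N)"
      unfolding W_def by (rule NF.real_cond_exp_intA[OF f_N B])
    then show "(\<integral>\<omega>\<in>D. indicator A \<omega> * f \<omega> \<partial>M) = (\<integral>\<omega>\<in>D. indicator A \<omega> * W \<omega> \<partial>M)"
      unfolding restrict
      using integral_N[of "\<lambda>\<omega>. indicator B \<omega> * f \<omega>"] integral_N[of "\<lambda>\<omega>. indicator B \<omega> * W \<omega>"]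
        B sets_F f_meas W_M by (auto simp: set_lebesgue_integral_def)
  next
    show "integrable M (\<lambda>\<omega>. indicator A \<omega> * f \<omega>)" using integrable_mult_indicator[OF AM f] by simp
    show "integrable M (\<lambda>\<omega>. indicator A \<omega> * W \<omega>)"
      using int_N[OF W_M] NF.real_cond_exp_int(1)[OF f_N] by (simp add: W_def)
    show "(\<lambda>\<omega>. indicator A \<omega> * W \<omega>) \<in> borel_measurable H"
      using A measurable_from_subalg[OF F W_F] by measurable
  qed
  then show ?thesis unfolding W_def N_def .
qed

lemma (in finite_measure) real_cond_exp_uniform_measure:
  assumes H: "subalgebra M H" and F: "subalgebra H F"
    and A: "A \<in> sets H" and A_pos: "emeasure M A \<noteq> 0"
    and trace: "\<And>D. D \<in> sets H \<Longrightarrow> \<exists>B\<in>sets F. D \<inter> A = B \<inter> A"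
    and f: "integrable M f"
  shows "AE \<omega> in M. \<omega> \<in> A \<longrightarrow> real_cond_exp (uniform_measure M A) F f \<omega> = real_cond_exp M H f \<omega>"
proof -
  interpret MH: sigma_finite_subalgebra M H
    by (rule finite_measure_subalgebra_is_sigma_finite) (unfold_locales, fact H)
  have "A \<in> sets M" using A H by (auto simp: subalgebra_def)
  then have "AE \<omega> in M. real_cond_exp M H (\<lambda>\<omega>. indicator A \<omega> * f \<omega>) \<omega> = indicator A \<omega> * real_cond_exp M H f \<omega>"
    using A f integrable_mult_indicator[OF _ f] by (intro MH.real_cond_exp_mult) auto
  moreover have "AE \<omega> in M. real_cond_exp M H (\<lambda>\<omega>. indicator A \<omega> * f \<omega>) \<omega>
      = indicator A \<omega> * real_cond_exp (uniform_measure M A) F f \<omega>"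
    using H F A A_pos trace f by (rule real_cond_exp_indicator_uniform_measure)
  ultimately show ?thesis by eventually_elim (auto simp: indicator_def)
qed

locale progressive_enlargement =
  fixes M :: "'a measure" and G :: "nat \<Rightarrow> 'a measure" and T :: nat and \<tau> :: "'a \<Rightarrow> nat"
  assumes G_sub: "\<And>s. s \<le> T \<Longrightarrow> subalgebra M (G s)"
    and G_mono: "\<And>r s. r \<le> s \<Longrightarrow> s \<le> T \<Longrightarrow> sets (G r) \<subseteq> sets (G s)"
    and random_time: "stopping_time_upto M (\<lambda>_. M) T \<tau>"
begin

abbreviation "H \<equiv> prog_enlargement M G \<tau>"

lemma tau_le_sets: "s \<le> T \<Longrightarrow> {\<omega>\<in>space M. \<tau> \<omega> \<le> s} \<in> sets M"
  using random_time unfolding stopping_time_upto_def by blast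

lemma space_H [simp]: "space (H k) = space M"
  unfolding prog_enlargement_def by (simp add: space_measure_of_conv)

lemma sets_H:
  assumes "k \<le> T"
  shows "sets (H k) = sigma_sets (space M) (sets (G k) \<union> {{\<omega>\<in>space M. \<tau> \<omega> \<le> s} | s. s \<le> k})"
proof -
  have "sets (G k) \<union> {{\<omega>\<in>space M. \<tau> \<omega> \<le> s} | s. s \<le> k} \<subseteq> Pow (space M)"
    using G_sub[OF assms] sets.sets_into_space by (fastforce simp: subalgebra_def)
  then show ?thesis unfolding prog_enlargement_def by (simp add: sets_measure_of)
qed

lemma H_subalgebra: "k \<le> T \<Longrightarrow> subalgebra M (H k)"
  unfolding subalgebra_def using G_sub tau_le_sets
  by (auto simp: sets_H subalgebra_def intro!: sets.sigma_sets_subset)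

lemma G_subset_H: "k \<le> T \<Longrightarrow> sets (G k) \<subseteq> sets (H k)"
  by (auto simp: sets_H)

lemma tau_le_in_H: "s \<le> k \<Longrightarrow> k \<le> T \<Longrightarrow> {\<omega>\<in>space M. \<tau> \<omega> \<le> s} \<in> sets (H k)"
  by (auto simp: sets_H)

lemma survival_in_H:
  assumes "t \<le> T"
  shows "{\<omega>\<in>space M. t < \<tau> \<omega>} \<in> sets (H t)"
proof -
  have "{\<omega>\<in>space M. t < \<tau> \<omega>} = space M - {\<omega>\<in>space M. \<tau> \<omega> \<le> t}" by auto
  then show ?thesis using sets.compl_sets[OF tau_le_in_H[OF order.refl assms]] by simp
qed

lemma H_mono:
  assumes "r \<le> s" and "s \<le> T"
  shows "sets (H r) \<subseteq> sets (H s)"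
proof -
  have "sets (G r) \<union> {{\<omega>\<in>space M. \<tau> \<omega> \<le> u} | u. u \<le> r} \<subseteq> sets (H s)"
    using G_mono[OF assms] G_subset_H[OF assms(2)] tau_le_in_H assms by fastforce
  then have "sigma_sets (space M) (sets (G r) \<union> {{\<omega>\<in>space M. \<tau> \<omega> \<le> u} | u. u \<le> r}) \<subseteq> sets (H s)"
    using sets.sigma_sets_subset[of _ "H s"] by simp
  then show ?thesis using assms by (simp add: sets_H)
qed

lemma G_subalgebra_H: "s \<le> k \<Longrightarrow> k \<le> T \<Longrightarrow> subalgebra (H k) (G s)"
  using G_sub[of s] G_mono[of s k] G_subset_H[of k] by (auto simp: subalgebra_def)

lemma H_subalgebra_H: "r \<le> s \<Longrightarrow> s \<le> T \<Longrightarrow> subalgebra (H s) (H r)"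
  by (simp add: subalgebra_def H_mono)

lemma H_trace:
  assumes "k \<le> T" and "D \<in> sets (H k)"
  shows "\<exists>B\<in>sets (G k). D \<inter> {\<omega>\<in>space M. k < \<tau> \<omega>} = B \<inter> {\<omega>\<in>space M. k < \<tau> \<omega>}"
proof (rule sigma_sets_trace_disjoint_generators)
  show "D \<in> sigma_sets (space (G k)) (sets (G k) \<union> {{\<omega>\<in>space M. \<tau> \<omega> \<le> s} | s. s \<le> k})"
    using assms G_sub[OF assms(1)] by (simp add: sets_H subalgebra_def)
qed auto

lemma G_stopping_time_H: "stopping_time_upto M G T \<nu> \<Longrightarrow> stopping_time_upto M H T \<nu>"
  by (rule stopping_time_upto_mono) (auto dest: G_subset_H)

lemma H_stopping_time_random: "stopping_time_upto M H T \<nu> \<Longrightarrow> stopping_time_upto M (\<lambda>_. M) T \<nu>"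
  by (rule stopping_time_upto_mono) (use H_subalgebra in \<open>auto simp: subalgebra_def\<close>)

lemma min_tau_stopping_time:
  assumes "k \<le> T"
  shows "stopping_time_upto M (\<lambda>_. H k) k (\<lambda>\<omega>. min (\<tau> \<omega>) k)"
  unfolding stopping_time_upto_def
proof (intro conjI ballI allI impI)
  fix s assume "s \<le> k"
  then show "{\<omega> \<in> space M. min (\<tau> \<omega>) k \<le> s} \<in> sets (H k)"
    using tau_le_in_H[of s k] assms sets.top[of "H k"]
    by (cases "s = k") (auto simp: min_le_iff_disj)
qed simp

end

locale optimal_stopping = progressive_enlargement + prob_space M +
  fixes X Y :: "nat \<Rightarrow> 'a \<Rightarrow> real"
  assumes X_adapted: "\<And>s. s \<le> T \<Longrightarrow> X s \<in> borel_measurable (G s)"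
    and Y_adapted: "\<And>s. s \<le> T \<Longrightarrow> Y s \<in> borel_measurable (G s)"
    and X_int: "integrable M (\<lambda>\<omega>. Max ((\<lambda>s. \<bar>X s \<omega>\<bar>) ` {0..T}))"
    and Y_int: "integrable M (\<lambda>\<omega>. Max ((\<lambda>s. \<bar>Y s \<omega>\<bar>) ` {0..T}))"
begin

lemma sigma_finite_subalgebra_H: "k \<le> T \<Longrightarrow> sigma_finite_subalgebra M (H k)"
  by (rule finite_measure_subalgebra_is_sigma_finite, unfold_locales) (rule H_subalgebra)

lemma payoff_const_measurable_H:
  assumes "k \<le> T"
  shows "payoff X Y \<tau> (\<lambda>_. k) \<in> borel_measurable (H k)"
proof -
  have Y_H: "Y s \<in> borel_measurable (H k)" if "s \<in> {..k}" for s
    using that assms by (intro measurable_from_subalg[OF G_subalgebra_H Y_adapted]) auto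
  have min_tau: "(\<lambda>\<omega>. min (\<tau> \<omega>) k) \<in> measurable (H k) (count_space {..k})"
    by (rule stopping_time_upto_measurable[OF min_tau_stopping_time[OF assms]]) simp
  have Y_tau_H: "(\<lambda>\<omega>. Y (min (\<tau> \<omega>) k) \<omega>) \<in> borel_measurable (H k)"
    using Y_H min_tau by (rule measurable_compose_countable'[where f=Y]) (auto intro: countable_finite)
  have X_H: "X k \<in> borel_measurable (H k)"
    using assms by (intro measurable_from_subalg[OF G_subalgebra_H X_adapted]) auto
  have "payoff X Y \<tau> (\<lambda>_. k) = (\<lambda>\<omega>. if \<tau> \<omega> \<le> k then Y (min (\<tau> \<omega>) k) \<omega> else X k \<omega>)"
    by (auto simp: payoff_def fun_eq_iff)
  also have "\<dots> \<in> borel_measurable (H k)"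
    using Y_tau_H X_H tau_le_in_H[OF order.refl assms] by (intro measurable_If) simp_all
  finally show ?thesis .
qed

lemma payoff_integrable:
  assumes \<nu>: "stopping_time_upto M (\<lambda>_. M) T \<nu>"
  shows "integrable M (payoff X Y \<tau> \<nu>)"
proof (rule Bochner_Integration.integrable_bound)
  show "integrable M (\<lambda>\<omega>. Max ((\<lambda>s. \<bar>X s \<omega>\<bar>) ` {0..T}) + Max ((\<lambda>s. \<bar>Y s \<omega>\<bar>) ` {0..T}))"
    using X_int Y_int by simp
  have payoff_const: "(\<lambda>\<omega>. payoff X Y \<tau> (\<lambda>_. s) \<omega>) \<in> borel_measurable M" if "s \<in> {..T}" for s
    using that by (intro measurable_from_subalg[OF H_subalgebra payoff_const_measurable_H]) auto
  have "payoff X Y \<tau> \<nu> = (\<lambda>\<omega>. payoff X Y \<tau> (\<lambda>_. \<nu> \<omega>) \<omega>)"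
    by (simp add: payoff_def fun_eq_iff)
  also have "\<dots> \<in> borel_measurable M"
    using payoff_const stopping_time_upto_measurable[OF \<nu> refl]
    by (rule measurable_compose_countable'[where f="\<lambda>s. payoff X Y \<tau> (\<lambda>_. s)"])
      (auto intro: countable_finite)
  finally show "payoff X Y \<tau> \<nu> \<in> borel_measurable M" .
  show "AE \<omega> in M. norm (payoff X Y \<tau> \<nu> \<omega>)
      \<le> norm (Max ((\<lambda>s. \<bar>X s \<omega>\<bar>) ` {0..T}) + Max ((\<lambda>s. \<bar>Y s \<omega>\<bar>) ` {0..T}))"
  proof (rule AE_I2)
    fix \<omega> assume "\<omega> \<in> space M"
    then have "\<nu> \<omega> \<le> T" "\<tau> \<omega> \<le> T" using \<nu> random_time by (auto simp: stopping_time_upto_def)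
    then have "\<bar>X (\<nu> \<omega>) \<omega>\<bar> \<le> Max ((\<lambda>s. \<bar>X s \<omega>\<bar>) ` {0..T})" "\<bar>Y (\<tau> \<omega>) \<omega>\<bar> \<le> Max ((\<lambda>s. \<bar>Y s \<omega>\<bar>) ` {0..T})"
      by (auto intro!: Max_ge)
    then show "norm (payoff X Y \<tau> \<nu> \<omega>)
        \<le> norm (Max ((\<lambda>s. \<bar>X s \<omega>\<bar>) ` {0..T}) + Max ((\<lambda>s. \<bar>Y s \<omega>\<bar>) ` {0..T}))"
      by (auto simp: payoff_def)
  qed
qed

lemma payoff_integrable_H: "stopping_time_upto M H T \<nu> \<Longrightarrow> integrable M (payoff X Y \<tau> \<nu>)"
  by (rule payoff_integrable[OF H_stopping_time_random])

lemma cond_exp_eq_immediate_payoff: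
  assumes "k \<le> T" and C: "C \<in> sets (H k)" and f: "integrable M f"
    and eq: "AE \<omega> in M. \<omega> \<in> C \<longrightarrow> f \<omega> = payoff X Y \<tau> (\<lambda>_. k) \<omega>"
  shows "AE \<omega> in M. \<omega> \<in> C \<longrightarrow> real_cond_exp M (H k) f \<omega> = payoff X Y \<tau> (\<lambda>_. k) \<omega>"
proof -
  interpret sigma_finite_subalgebra M "H k" by (rule sigma_finite_subalgebra_H[OF \<open>k \<le> T\<close>])
  have R: "integrable M (payoff X Y \<tau> (\<lambda>_. k))"
    using assms(1) by (intro payoff_integrable stopping_time_upto_const) (auto simp: subalgebra_def)
  have "AE \<omega> in M. \<omega> \<in> C \<longrightarrow> real_cond_exp M (H k) f \<omega> = real_cond_exp M (H k) (payoff X Y \<tau> (\<lambda>_. k)) \<omega>"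
    using C f R eq by (rule real_cond_exp_local)
  moreover have "AE \<omega> in M. real_cond_exp M (H k) (payoff X Y \<tau> (\<lambda>_. k)) \<omega> = payoff X Y \<tau> (\<lambda>_. k) \<omega>"
    using R payoff_const_measurable_H[OF assms(1)] by (rule real_cond_exp_F_meas)
  ultimately show ?thesis by eventually_elim auto
qed

lemma cond_exp_payoff_tau_le:
  assumes "k \<le> T" and \<nu>: "stopping_time_upto M (\<lambda>_. M) T \<nu>" and "AE \<omega> in M. k \<le> \<nu> \<omega>"
  shows "AE \<omega> in M. \<tau> \<omega> \<le> k \<longrightarrow> real_cond_exp M (H k) (payoff X Y \<tau> \<nu>) \<omega> = payoff X Y \<tau> (\<lambda>_. k) \<omega>"
proof -
  have "AE \<omega> in M. \<omega> \<in> {\<omega>\<in>space M. \<tau> \<omega> \<le> k} \<longrightarrow>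
      real_cond_exp M (H k) (payoff X Y \<tau> \<nu>) \<omega> = payoff X Y \<tau> (\<lambda>_. k) \<omega>"
    using assms(3) by (intro cond_exp_eq_immediate_payoff tau_le_in_H payoff_integrable \<nu> \<open>k \<le> T\<close>)
      (auto simp: payoff_def elim!: eventually_mono)
  then show ?thesis using AE_space by eventually_elim auto
qed

definition optimal_from :: "nat \<Rightarrow> ('a \<Rightarrow> nat) \<Rightarrow> bool" where
  "optimal_from k \<sigma> \<longleftrightarrow> stopping_time_upto M G T \<sigma> \<and> (\<forall>\<omega>\<in>space M. k \<le> \<sigma> \<omega>) \<and>
     (\<forall>\<nu>. stopping_time_upto M H T \<nu> \<longrightarrow> (AE \<omega> in M. k \<le> \<nu> \<omega>) \<longrightarrow>
        (AE \<omega> in M. real_cond_exp M (H k) (payoff X Y \<tau> \<nu>) \<omega> \<le> real_cond_exp M (H k) (payoff X Y \<tau> \<sigma>) \<omega>))"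

lemma optimal_from_horizon: "optimal_from T (\<lambda>_. T)"
  unfolding optimal_from_def
proof (intro conjI ballI allI impI)
  show "stopping_time_upto M G T (\<lambda>_. T)" by (rule stopping_time_upto_const[OF order.refl G_sub])
  fix \<nu> assume \<nu>: "stopping_time_upto M H T \<nu>" and "AE \<omega> in M. T \<le> \<nu> \<omega>"
  from this(2) have "AE \<omega> in M. \<nu> \<omega> = T"
    using AE_space by eventually_elim (use \<nu> in \<open>auto simp: stopping_time_upto_def intro: antisym\<close>)
  then have "AE \<omega> in M. payoff X Y \<tau> \<nu> \<omega> = payoff X Y \<tau> (\<lambda>_. T) \<omega>"
    by eventually_elim (simp add: payoff_def)
  then have "AE \<omega> in M. real_cond_exp M (H T) (payoff X Y \<tau> \<nu>) \<omega> = real_cond_exp M (H T) (payoff X Y \<tau> (\<lambda>_. T)) \<omega>"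
    using payoff_integrable_H[OF \<nu>] payoff_integrable_H[OF G_stopping_time_H[OF stopping_time_upto_const[OF order.refl G_sub]]]
    by (intro sigma_finite_subalgebra.real_cond_exp_cong[OF sigma_finite_subalgebra_H])
      (auto intro: borel_measurable_integrable)
  then show "AE \<omega> in M. real_cond_exp M (H T) (payoff X Y \<tau> \<nu>) \<omega> \<le> real_cond_exp M (H T) (payoff X Y \<tau> (\<lambda>_. T)) \<omega>"
    by eventually_elim simp
qed simp

lemma cond_exp_payoff_le_max_stop_continue:
  assumes "k < T" and opt: "optimal_from (Suc k) \<sigma>'"
    and \<nu>: "stopping_time_upto M H T \<nu>" and \<nu>_ge: "AE \<omega> in M. k \<le> \<nu> \<omega>"
  shows "AE \<omega> in M. real_cond_exp M (H k) (payoff X Y \<tau> \<nu>) \<omega>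
      \<le> max (payoff X Y \<tau> (\<lambda>_. k) \<omega>) (real_cond_exp M (H k) (payoff X Y \<tau> \<sigma>') \<omega>)"
proof -
  interpret sigma_finite_subalgebra M "H k" by (rule sigma_finite_subalgebra_H) (use \<open>k < T\<close> in simp)
  define \<nu>' where "\<nu>' = (\<lambda>\<omega>. max (\<nu> \<omega>) (Suc k))"
  define C where "C = {\<omega>\<in>space M. \<nu> \<omega> \<le> k}"
  have \<nu>': "stopping_time_upto M H T \<nu>'"
    unfolding \<nu>'_def using \<nu> \<open>k < T\<close> by (intro stopping_time_upto_max_const) auto
  have \<sigma>': "stopping_time_upto M H T \<sigma>'"
    using opt G_stopping_time_H by (simp add: optimal_from_def)
  have "C \<in> sets (H k)"
    using \<nu> \<open>k < T\<close> by (auto simp: C_def stopping_time_upto_def)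
  then have C: "C \<in> sets (H k)" "space M - C \<in> sets (H k)"
    using sets.compl_sets[of C "H k"] by auto
  have "AE \<omega> in M. real_cond_exp M (H (Suc k)) (payoff X Y \<tau> \<nu>') \<omega>
      \<le> real_cond_exp M (H (Suc k)) (payoff X Y \<tau> \<sigma>') \<omega>"
    using opt \<nu>' by (simp add: optimal_from_def \<nu>'_def)
  then have continue: "AE \<omega> in M. real_cond_exp M (H k) (payoff X Y \<tau> \<nu>') \<omega>
      \<le> real_cond_exp M (H k) (payoff X Y \<tau> \<sigma>') \<omega>"
    using \<open>k < T\<close> payoff_integrable_H[OF \<nu>'] payoff_integrable_H[OF \<sigma>']
    by (intro real_cond_exp_mono_tower[OF H_subalgebra H_subalgebra_H]) auto
  have "AE \<omega> in M. \<omega> \<in> C \<longrightarrow> real_cond_exp M (H k) (payoff X Y \<tau> \<nu>) \<omega> = payoff X Y \<tau> (\<lambda>_. k) \<omega>"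
    using \<nu>_ge \<open>k < T\<close> C payoff_integrable_H[OF \<nu>]
    by (intro cond_exp_eq_immediate_payoff) (auto simp: C_def payoff_def elim!: eventually_mono)
  moreover have "AE \<omega> in M. \<omega> \<in> space M - C \<longrightarrow>
      real_cond_exp M (H k) (payoff X Y \<tau> \<nu>) \<omega> = real_cond_exp M (H k) (payoff X Y \<tau> \<nu>') \<omega>"
    using C payoff_integrable_H[OF \<nu>] payoff_integrable_H[OF \<nu>']
    by (intro real_cond_exp_local) (auto simp: C_def \<nu>'_def payoff_def max_def le_Suc_eq intro!: AE_I2)
  ultimately show ?thesis using continue AE_space by eventually_elim auto
qed

lemma cond_exp_payoff_eq_max_stop_continue:
  assumes "k < T" and \<sigma>': "stopping_time_upto M (\<lambda>_. M) T \<sigma>'" and \<sigma>'_ge: "\<forall>\<omega>\<in>space M. k \<le> \<sigma>' \<omega>"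
    and B: "B \<in> sets (H k)"
    and B_trace: "{\<omega>\<in>space M. real_cond_exp M (H k) (payoff X Y \<tau> \<sigma>') \<omega> \<le> payoff X Y \<tau> (\<lambda>_. k) \<omega>}
        \<inter> {\<omega>\<in>space M. k < \<tau> \<omega>} = B \<inter> {\<omega>\<in>space M. k < \<tau> \<omega>}"
  shows "AE \<omega> in M. real_cond_exp M (H k) (payoff X Y \<tau> (\<lambda>\<omega>. if \<omega> \<in> B then k else \<sigma>' \<omega>)) \<omega>
      = max (payoff X Y \<tau> (\<lambda>_. k) \<omega>) (real_cond_exp M (H k) (payoff X Y \<tau> \<sigma>') \<omega>)"
proof -
  interpret sigma_finite_subalgebra M "H k" by (rule sigma_finite_subalgebra_H) (use \<open>k < T\<close> in simp)
  define \<sigma> where "\<sigma> = (\<lambda>\<omega>. if \<omega> \<in> B then k else \<sigma>' \<omega>)"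
  have BM: "B \<in> sets M" using B H_subalgebra[of k] \<open>k < T\<close> by (auto simp: subalgebra_def)
  have \<sigma>: "stopping_time_upto M (\<lambda>_. M) T \<sigma>"
    unfolding \<sigma>_def using \<sigma>' \<sigma>'_ge BM \<open>k < T\<close>
    by (intro stopping_time_upto_if) (auto simp: subalgebra_def)
  have "AE \<omega> in M. \<omega> \<in> B \<longrightarrow> real_cond_exp M (H k) (payoff X Y \<tau> \<sigma>) \<omega> = payoff X Y \<tau> (\<lambda>_. k) \<omega>"
    using \<open>k < T\<close> B payoff_integrable[OF \<sigma>]
    by (intro cond_exp_eq_immediate_payoff) (auto simp: \<sigma>_def payoff_def)
  moreover have "AE \<omega> in M. \<omega> \<in> space M - B \<longrightarrow>
      real_cond_exp M (H k) (payoff X Y \<tau> \<sigma>) \<omega> = real_cond_exp M (H k) (payoff X Y \<tau> \<sigma>') \<omega>"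
    using sets.compl_sets[OF B] payoff_integrable[OF \<sigma>] payoff_integrable[OF \<sigma>']
    by (intro real_cond_exp_local) (auto simp: \<sigma>_def payoff_def)
  moreover have "AE \<omega> in M. \<tau> \<omega> \<le> k \<longrightarrow>
      real_cond_exp M (H k) (payoff X Y \<tau> \<sigma>') \<omega> = payoff X Y \<tau> (\<lambda>_. k) \<omega>"
    using \<open>k < T\<close> \<sigma>' \<sigma>'_ge by (intro cond_exp_payoff_tau_le) auto
  ultimately show ?thesis unfolding \<sigma>_def[symmetric] using AE_space
  proof eventually_elim
    case (elim \<omega>)
    show ?case
    proof (cases "\<tau> \<omega> \<le> k")
      case False
      then have "\<omega> \<in> B \<longleftrightarrow> real_cond_exp M (H k) (payoff X Y \<tau> \<sigma>') \<omega> \<le> payoff X Y \<tau> (\<lambda>_. k) \<omega>"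
        using B_trace \<open>\<omega> \<in> space M\<close> by (auto simp: not_le)
      with elim show ?thesis by auto
    qed (use elim in auto)
  qed
qed

lemma optimal_from_Suc:
  assumes "k < T" and opt: "optimal_from (Suc k) \<sigma>'"
  obtains \<sigma> where "optimal_from k \<sigma>"
proof -
  have \<sigma>': "stopping_time_upto M G T \<sigma>'" and \<sigma>'_ge: "\<forall>\<omega>\<in>space M. Suc k \<le> \<sigma>' \<omega>"
    using opt by (auto simp: optimal_from_def)
  have \<sigma>'_M: "stopping_time_upto M (\<lambda>_. M) T \<sigma>'"
    using H_stopping_time_random[OF G_stopping_time_H[OF \<sigma>']] .
  let ?R = "payoff X Y \<tau> (\<lambda>_. k)" and ?W = "real_cond_exp M (H k) (payoff X Y \<tau> \<sigma>')"
  have "?R \<in> borel_measurable (H k)" using \<open>k < T\<close> by (intro payoff_const_measurable_H) simp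
  then have "{\<omega>\<in>space (H k). ?W \<omega> \<le> ?R \<omega>} \<in> sets (H k)" by measurable
  \<comment> \<open>On \<open>{\<tau> \<le> k}\<close> stopping and continuing pay the same, so only the trace of the stopping
      region on \<open>{k < \<tau>}\<close> matters, and that trace is \<open>G k\<close>-measurable.\<close>
  then obtain B where B: "B \<in> sets (G k)"
    and B_trace: "{\<omega>\<in>space M. ?W \<omega> \<le> ?R \<omega>} \<inter> {\<omega>\<in>space M. k < \<tau> \<omega>} = B \<inter> {\<omega>\<in>space M. k < \<tau> \<omega>}"
    using H_trace[of k] \<open>k < T\<close> by auto
  define \<sigma> where "\<sigma> = (\<lambda>\<omega>. if \<omega> \<in> B then k else \<sigma>' \<omega>)"
  have "optimal_from k \<sigma>"
    unfolding optimal_from_def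
  proof (intro conjI ballI allI impI)
    show "stopping_time_upto M G T \<sigma>"
      unfolding \<sigma>_def using \<sigma>' \<sigma>'_ge B \<open>k < T\<close> G_sub G_mono
      by (intro stopping_time_upto_if) (auto intro: Suc_leD)
    show "k \<le> \<sigma> \<omega>" if "\<omega> \<in> space M" for \<omega>
      using \<sigma>'_ge that by (auto simp: \<sigma>_def intro: Suc_leD)
    fix \<nu> assume "stopping_time_upto M H T \<nu>" and "AE \<omega> in M. k \<le> \<nu> \<omega>"
    then have "AE \<omega> in M. real_cond_exp M (H k) (payoff X Y \<tau> \<nu>) \<omega> \<le> max (?R \<omega>) (?W \<omega>)"
      by (rule cond_exp_payoff_le_max_stop_continue[OF \<open>k < T\<close> opt])
    moreover have "AE \<omega> in M. real_cond_exp M (H k) (payoff X Y \<tau> \<sigma>) \<omega> = max (?R \<omega>) (?W \<omega>)"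
      unfolding \<sigma>_def using \<open>k < T\<close> \<sigma>'_M \<sigma>'_ge B_trace G_subset_H[of k] B
      by (intro cond_exp_payoff_eq_max_stop_continue) (auto intro: Suc_leD)
    ultimately show "AE \<omega> in M. real_cond_exp M (H k) (payoff X Y \<tau> \<nu>) \<omega> \<le> real_cond_exp M (H k) (payoff X Y \<tau> \<sigma>) \<omega>"
      by eventually_elim simp
  qed
  then show ?thesis by (rule that)
qed

lemma optimal_from_exists:
  assumes "k \<le> T"
  obtains \<sigma> where "optimal_from k \<sigma>"
  using assms
proof (induction k rule: inc_induct)
  case base
  then show ?case using optimal_from_horizon by blast
next
  case (step k)
  then show ?case using optimal_from_Suc by (meson Suc_le_eq)
qed

lemma ess_sup_eq_optimal:
  assumes opt: "optimal_from t \<sigma>"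
  shows "AE \<omega> in M. ess_sup_family M
      ((\<lambda>\<nu> \<omega>. ereal (real_cond_exp M (H t) (payoff X Y \<tau> \<nu>) \<omega>)) ` stopping_times_from M H T t) \<omega>
    = ereal (real_cond_exp M (H t) (payoff X Y \<tau> \<sigma>) \<omega>)"
proof (rule ess_sup_family_eq_greatest)
  have "\<sigma> \<in> stopping_times_from M H T t"
    using opt by (auto simp: optimal_from_def stopping_times_from_def G_stopping_time_H intro!: AE_I2)
  then show "(\<lambda>\<omega>. ereal (real_cond_exp M (H t) (payoff X Y \<tau> \<sigma>) \<omega>))
      \<in> (\<lambda>\<nu> \<omega>. ereal (real_cond_exp M (H t) (payoff X Y \<tau> \<nu>) \<omega>)) ` stopping_times_from M H T t"
    by (rule imageI)
next
  fix \<phi> assume "\<phi> \<in> (\<lambda>\<nu> \<omega>. ereal (real_cond_exp M (H t) (payoff X Y \<tau> \<nu>) \<omega>)) ` stopping_times_from M H T t"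
  then obtain \<nu> where "\<nu> \<in> stopping_times_from M H T t"
    and \<phi>: "\<phi> = (\<lambda>\<omega>. ereal (real_cond_exp M (H t) (payoff X Y \<tau> \<nu>) \<omega>))" by blast
  then have "AE \<omega> in M. real_cond_exp M (H t) (payoff X Y \<tau> \<nu>) \<omega> \<le> real_cond_exp M (H t) (payoff X Y \<tau> \<sigma>) \<omega>"
    using opt unfolding optimal_from_def stopping_times_from_def by blast
  then show "AE \<omega> in M. \<phi> \<omega> \<le> ereal (real_cond_exp M (H t) (payoff X Y \<tau> \<sigma>) \<omega>)"
    unfolding \<phi> by eventually_elim simp
qed simp

lemma cond_exp_given_survival:
  assumes "t \<le> T" and "emeasure M {\<omega>\<in>space M. t < \<tau> \<omega>} \<noteq> 0" and "integrable M f"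
  shows "AE \<omega> in M. t < \<tau> \<omega> \<longrightarrow>
    real_cond_exp (uniform_measure M {\<omega>\<in>space M. t < \<tau> \<omega>}) (G t) f \<omega> = real_cond_exp M (H t) f \<omega>"
proof -
  have "AE \<omega> in M. \<omega> \<in> {\<omega>\<in>space M. t < \<tau> \<omega>} \<longrightarrow>
    real_cond_exp (uniform_measure M {\<omega>\<in>space M. t < \<tau> \<omega>}) (G t) f \<omega> = real_cond_exp M (H t) f \<omega>"
    using assms H_subalgebra G_subalgebra_H survival_in_H H_trace
    by (intro real_cond_exp_uniform_measure) auto
  then show ?thesis using AE_space by eventually_elim auto
qed

lemma ess_sup_conditioned_on_survival:
  assumes "t \<le> T" and opt: "optimal_from t \<sigma>"
  defines "N \<equiv> uniform_measure M {\<omega>\<in>space M. t < \<tau> \<omega>}"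
  shows "AE \<omega> in M. t < \<tau> \<omega> \<longrightarrow>
    ess_sup_family N ((\<lambda>\<nu> \<omega>. ereal (real_cond_exp N (G t) (payoff X Y \<tau> \<nu>) \<omega>)) ` stopping_times_from M G T t) \<omega>
    = ereal (real_cond_exp M (H t) (payoff X Y \<tau> \<sigma>) \<omega>)"
proof -
  define A where "A = {\<omega>\<in>space M. t < \<tau> \<omega>}"
  let ?\<Phi> = "(\<lambda>\<nu> \<omega>. ereal (real_cond_exp N (G t) (payoff X Y \<tau> \<nu>) \<omega>)) ` stopping_times_from M G T t"
  let ?Z = "\<lambda>\<omega>. ereal (real_cond_exp N (G t) (payoff X Y \<tau> \<sigma>) \<omega>)"
  have A: "A \<in> sets M" using survival_in_H H_subalgebra \<open>t \<le> T\<close> by (auto simp: A_def subalgebra_def)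
  have \<sigma>: "stopping_time_upto M G T \<sigma>" "\<forall>\<omega>\<in>space M. t \<le> \<sigma> \<omega>"
    using opt by (auto simp: optimal_from_def)
  show ?thesis
  proof (cases "emeasure M A = 0")
    case True
    then have "AE \<omega> in M. \<omega> \<notin> A" using A by (intro AE_not_in) (simp add: null_sets_def)
    then show ?thesis using AE_space by eventually_elim (auto simp: A_def)
  next
    case False
    note cond_exp_eq = cond_exp_given_survival[OF \<open>t \<le> T\<close> False[unfolded A_def], folded N_def]
    have "AE \<omega> in N. ess_sup_family N ?\<Phi> \<omega> = ?Z \<omega>"
    proof (rule ess_sup_family_eq_greatest)
      show "?Z \<in> ?\<Phi>" using \<sigma> by (auto simp: stopping_times_from_def intro!: AE_I2)
    next
      fix \<phi> assume "\<phi> \<in> ?\<Phi>"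
      then obtain \<nu> where \<nu>: "stopping_time_upto M G T \<nu>" "AE \<omega> in M. t \<le> \<nu> \<omega>"
        and \<phi>: "\<phi> = (\<lambda>\<omega>. ereal (real_cond_exp N (G t) (payoff X Y \<tau> \<nu>) \<omega>))"
        by (auto simp: stopping_times_from_def)
      have "AE \<omega> in M. real_cond_exp M (H t) (payoff X Y \<tau> \<nu>) \<omega> \<le> real_cond_exp M (H t) (payoff X Y \<tau> \<sigma>) \<omega>"
        using opt G_stopping_time_H[OF \<nu>(1)] \<nu>(2) by (auto simp: optimal_from_def)
      moreover note cond_exp_eq[OF payoff_integrable_H[OF G_stopping_time_H[OF \<nu>(1)]]]
        cond_exp_eq[OF payoff_integrable_H[OF G_stopping_time_H[OF \<sigma>(1)]]]
      ultimately have "AE \<omega> in M. \<omega> \<in> A \<longrightarrow> \<phi> \<omega> \<le> ?Z \<omega>"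
        unfolding \<phi> A_def by eventually_elim auto
      then show "AE \<omega> in N. \<phi> \<omega> \<le> ?Z \<omega>"
        unfolding N_def A_def[symmetric] by (rule AE_uniform_measureI[OF A])
    qed (simp add: N_def)
    then have "AE \<omega> in M. \<omega> \<in> A \<longrightarrow> ess_sup_family N ?\<Phi> \<omega> = ?Z \<omega>"
      unfolding N_def A_def[symmetric] using False
      by (subst (asm) AE_uniform_measure) (auto simp: less_top[symmetric])
    then show ?thesis
      using cond_exp_eq[OF payoff_integrable_H[OF G_stopping_time_H[OF \<sigma>(1)]]] AE_space
      unfolding A_def by eventually_elim auto
  qed
qed

end

theorem theorem1:
  fixes M :: "'a measure" and F G :: "nat \<Rightarrow> 'a measure" and T t :: nat
    and X Y :: "nat \<Rightarrow> 'a \<Rightarrow> real" and \<tau> :: "'a \<Rightarrow> nat"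
  assumes "prob_space M"
    and "0 < T"
    and F_sub: "\<And>s. s \<le> T \<Longrightarrow> subalgebra M (F s)"
    and F_mono: "\<And>r s. r \<le> s \<Longrightarrow> s \<le> T \<Longrightarrow> sets (F r) \<subseteq> sets (F s)"
    and G_sub: "\<And>s. s \<le> T \<Longrightarrow> subalgebra M (G s)"
    and G_mono: "\<And>r s. r \<le> s \<Longrightarrow> s \<le> T \<Longrightarrow> sets (G r) \<subseteq> sets (G s)"
    and GF: "\<And>s. s \<le> T \<Longrightarrow> sets (G s) \<subseteq> sets (F s)"
    and X_adapted: "\<And>s. s \<le> T \<Longrightarrow> X s \<in> borel_measurable (G s)"
    and Y_adapted: "\<And>s. s \<le> T \<Longrightarrow> Y s \<in> borel_measurable (G s)"
    and X_int: "integrable M (\<lambda>\<omega>. Max ((\<lambda>s. \<bar>X s \<omega>\<bar>) ` {0..T}))"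
    and Y_int: "integrable M (\<lambda>\<omega>. Max ((\<lambda>s. \<bar>Y s \<omega>\<bar>) ` {0..T}))"
    and \<tau>: "stopping_time_upto M F T \<tau>"
    and "t < T"
  shows "\<exists>\<nu>h \<in> stopping_times_from M G T t.
     (AE \<omega> in M.
        ereal (real_cond_exp M (prog_enlargement M G \<tau> t) (payoff X Y \<tau> \<nu>h) \<omega>)
        = ess_sup_family M
            ((\<lambda>\<nu> \<omega>. ereal (real_cond_exp M (prog_enlargement M G \<tau> t) (payoff X Y \<tau> \<nu>) \<omega>))
               ` stopping_times_from M (prog_enlargement M G \<tau>) T t) \<omega>) \<and>
     (AE \<omega> in M.
        ess_sup_family M
            ((\<lambda>\<nu> \<omega>. ereal (real_cond_exp M (prog_enlargement M G \<tau> t) (payoff X Y \<tau> \<nu>) \<omega>))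
               ` stopping_times_from M (prog_enlargement M G \<tau>) T t) \<omega>
        = ereal (Y (\<tau> \<omega>) \<omega> * (if \<tau> \<omega> \<le> t then 1 else 0))
          + (if t < \<tau> \<omega> then 1 else 0) *
            ess_sup_family (uniform_measure M {\<omega>'\<in>space M. t < \<tau> \<omega>'})
              ((\<lambda>\<nu> \<omega>. ereal (real_cond_exp (uniform_measure M {\<omega>'\<in>space M. t < \<tau> \<omega>'}) (G t)
                                   (payoff X Y \<tau> \<nu>) \<omega>))
                 ` stopping_times_from M G T t) \<omega>)"
proof -
  \<comment> \<open>Only the events \<open>{\<tau> \<le> s} \<in> sets M\<close> enter.\<close>
  have "stopping_time_upto M (\<lambda>_. M) T \<tau>"
    using \<tau> by (rule stopping_time_upto_mono) (use F_sub in \<open>simp add: subalgebra_def\<close>)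
  then interpret optimal_stopping M G T \<tau> X Y
    using G_sub G_mono \<open>prob_space M\<close> X_adapted Y_adapted X_int Y_int
    by (simp add: optimal_stopping_def progressive_enlargement_def optimal_stopping_axioms_def)
  obtain \<sigma> where opt: "optimal_from t \<sigma>"
    using optimal_from_exists \<open>t < T\<close> by (metis less_imp_le)
  then have \<sigma>: "\<sigma> \<in> stopping_times_from M G T t" "\<sigma> \<in> stopping_times_from M H T t"
    by (auto simp: optimal_from_def stopping_times_from_def G_stopping_time_H intro!: AE_I2)
  note ess_sup = ess_sup_eq_optimal[OF opt]
  have stopped: "AE \<omega> in M. \<tau> \<omega> \<le> t \<longrightarrow> real_cond_exp M (H t) (payoff X Y \<tau> \<sigma>) \<omega> = Y (\<tau> \<omega>) \<omega>"
    using cond_exp_payoff_tau_le[of t \<sigma>] \<sigma>(2) \<open>t < T\<close>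
    by (auto simp: stopping_times_from_def payoff_def H_stopping_time_random elim!: eventually_mono)
  note survived = ess_sup_conditioned_on_survival[OF less_imp_le[OF \<open>t < T\<close>] opt]
  show ?thesis
  proof (intro bexI[OF _ \<sigma>(1)] conjI, goal_cases)
    case 1
    show ?case using ess_sup by eventually_elim simp
  next
    case 2
    show ?case using ess_sup stopped survived AE_space
      by eventually_elim (auto simp: not_le)
  qed
qed

end
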